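(* Let $G$ be a graph obtained as follows: start with a connected bipartite graph (the core) with bipartition $X\sqcup Y$, $X=\{x_1,\dots,x_n\}$, $Y=\{y_1,\dots,y_m\}$, $n,m\ge 1$; attach $f_i\ge 1$ leaves (new degree-one vertices adjacent only to $x_i$) to each $x_i$; and attach $t_j\ge 0$ pendant triangles to each $y_j$ (a pendant triangle at $y_j$ consists of two new vertices $u,v$ with edges $\{y_j,u\},\{y_j,v\},\{u,v\}$). Let $T=\sum_{j=1}^m t_j$. Then $P_G(-1)=(-1)^{n+T}\in\{\pm1\}$. In particular, $\mathfrak a(G)=0$.
   Context: The independence polynomial of a graph $G$ is $P_G(x)=\sum_i g_ix^i$, where $g_i$ is the number of independent sets of size $i$. For $G$ on vertex set $[N]$, let $S=K[x_1,\dots,x_N]$ ($K$ a field), $I(G)$ the edge ideal generated by $x_ix_j$ for edges $\{i,j\}$, and $\alpha(G)$ the independence number (equal to $\dim S/I(G)$). Writing the Hilbert series of $S/I(G)$ uniquely as $h_G(t)/(1-t)^{\alpha(G)}$ with $h_G(t)$ a polynomial with nonzero leading coefficient, the $\mathfrak a$-invariant is $\mathfrak a(G)=\deg h_G(t)-\alpha(G)$. *)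

theory Defs
  imports "HOL-Computational_Algebra.Computational_Algebra"
begin

definition simple_graph :: "'a set \<Rightarrow> 'a set set \<Rightarrow> bool" where
  "simple_graph V E \<longleftrightarrow> finite V \<and> (\<forall>e\<in>E. e \<subseteq> V \<and> card e = 2)"

definition indep_set :: "'a set \<Rightarrow> 'a set set \<Rightarrow> 'a set \<Rightarrow> bool" where
  "indep_set V E S \<longleftrightarrow> S \<subseteq> V \<and> (\<forall>e\<in>E. \<not> e \<subseteq> S)"

definition indep_poly :: "'a set \<Rightarrow> 'a set set \<Rightarrow> int poly" where
  "indep_poly V E = (\<Sum>S\<in>{S. indep_set V E S}. monom 1 (card S))"

definition indep_num :: "'a set \<Rightarrow> 'a set set \<Rightarrow> nat" where
  "indep_num V E = Max (card ` {S. indep_set V E S})"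

text \<open>The degree-d component of S/I(G), for the monomial ideal I(G), has as K-basis the
  standard monomials of degree d, i.e. the monomials x^a (a : V \<Rightarrow> nat, supported on V)
  of degree d not divisible by any x_i x_j with {i,j} an edge. Its dimension is thus
  the following count (independent of the field K).\<close>
definition hilb_fun :: "'a set \<Rightarrow> 'a set set \<Rightarrow> nat \<Rightarrow> nat" where
  "hilb_fun V E d = card {a :: 'a \<Rightarrow> nat. (\<forall>v. v \<notin> V \<longrightarrow> a v = 0) \<and> sum a V = d
                         \<and> (\<forall>e\<in>E. \<not> (\<forall>v\<in>e. 0 < a v))}"

definition hilb_series :: "'a set \<Rightarrow> 'a set set \<Rightarrow> rat fps" where
  "hilb_series V E = Abs_fps (\<lambda>d. of_nat (hilb_fun V E d))"

definition h_poly :: "'a set \<Rightarrow> 'a set set \<Rightarrow> rat poly" where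
  "h_poly V E = (THE h. fps_of_poly h = hilb_series V E * (1 - fps_X) ^ indep_num V E)"

definition a_invariant :: "'a set \<Rightarrow> 'a set set \<Rightarrow> int" where
  "a_invariant V E = int (degree (h_poly V E)) - int (indep_num V E)"

text \<open>Vertices: core vertices x_i (i<n), y_j (j<m); leaves Lf i k (k < f i) at x_i;
  pendant triangle k at y_j has new vertices TU j k, TW j k (k < t j).\<close>
datatype gv = Xv nat | Yv nat | Lf nat nat | TU nat nat | TW nat nat

text \<open>C \<subseteq> {..<n} \<times> {..<m} describes the core edges {x_i, y_j}.\<close>
definition core_verts :: "nat \<Rightarrow> nat \<Rightarrow> gv set" where
  "core_verts n m = Xv ` {..<n} \<union> Yv ` {..<m}"

definition core_adj :: "(nat \<times> nat) set \<Rightarrow> gv \<Rightarrow> gv \<Rightarrow> bool" where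
  "core_adj C u v \<longleftrightarrow> (\<exists>(i,j)\<in>C. (u = Xv i \<and> v = Yv j) \<or> (u = Yv j \<and> v = Xv i))"

definition core_connected :: "nat \<Rightarrow> nat \<Rightarrow> (nat \<times> nat) set \<Rightarrow> bool" where
  "core_connected n m C \<longleftrightarrow> (\<forall>u\<in>core_verts n m. \<forall>v\<in>core_verts n m. (core_adj C)\<^sup>*\<^sup>* u v)"

definition G_verts :: "nat \<Rightarrow> nat \<Rightarrow> (nat \<Rightarrow> nat) \<Rightarrow> (nat \<Rightarrow> nat) \<Rightarrow> gv set" where
  "G_verts n m f t = core_verts n m
     \<union> {Lf i k | i k. i < n \<and> k < f i}
     \<union> {TU j k | j k. j < m \<and> k < t j} \<union> {TW j k | j k. j < m \<and> k < t j}"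

definition G_edges :: "nat \<Rightarrow> nat \<Rightarrow> (nat \<times> nat) set \<Rightarrow> (nat \<Rightarrow> nat) \<Rightarrow> (nat \<Rightarrow> nat) \<Rightarrow> gv set set" where
  "G_edges n m C f t = {{Xv i, Yv j} | i j. (i, j) \<in> C}
     \<union> {{Xv i, Lf i k} | i k. i < n \<and> k < f i}
     \<union> {{Yv j, TU j k} | j k. j < m \<and> k < t j}
     \<union> {{Yv j, TW j k} | j k. j < m \<and> k < t j}
     \<union> {{TU j k, TW j k} | j k. j < m \<and> k < t j}"

end

theory Submission
  imports Defs
begin

text \<open>Write $Q(G) = P_G(-1) = \sum_S (-1)^{|S|}$ over the independent sets $S$ of $G$. Splitting
  by whether $S$ contains a vertex $v$ gives $Q(G) = Q(G - v) - Q(G - N[v])$; if $v$ has a pendant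
  neighbour, that neighbour is isolated in $G - v$, which forces $Q(G - v) = 0$, so
  $Q(G) = -Q(G - N[v])$. Applying this at $x_1, \dots, x_n$ in turn (each carries a leaf) deletes
  every core vertex, since by connectivity each $y_j$ is adjacent to some $x_i$. What remains is
  $T$ disjoint triangles, each of which contributes another factor $-1$ in the same way.

  For the $\mathfrak a$-invariant, the standard monomials of $S/I(G)$ are graded by their
  support, an independent set, which gives
  $h_G(t) = \sum_S t^{|S|} (1-t)^{\alpha - |S|}$. Its coefficient of $t^\alpha$ is
  $(-1)^\alpha P_G(-1) \neq 0$, so $\deg h_G = \alpha$.\<close>

definition alt_indep_count :: "'a set \<Rightarrow> 'a set set \<Rightarrow> int" where
  "alt_indep_count V E = (\<Sum>S | indep_set V E S. (-1) ^ card S)"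

definition neighbours :: "'a set set \<Rightarrow> 'a \<Rightarrow> 'a set" where
  "neighbours E v = {u. u \<noteq> v \<and> {v, u} \<in> E}"

lemma finite_indep_sets: "finite V \<Longrightarrow> finite {S. indep_set V E S}"
  by (rule finite_subset[of _ "Pow V"]) (auto simp: indep_set_def)

lemma finite_indep_set: "finite V \<Longrightarrow> indep_set V E S \<Longrightarrow> finite S"
  by (auto simp: indep_set_def intro: finite_subset)

lemma poly_indep_poly_minus_one: "poly (indep_poly V E) (-1) = alt_indep_count V E"
  by (simp add: indep_poly_def alt_indep_count_def poly_sum poly_monom)

lemma alt_indep_count_empty: "{} \<notin> E \<Longrightarrow> alt_indep_count {} E = 1"
proof -
  assume "{} \<notin> E"
  then have "{S. indep_set {} E S} = {{}}" by (auto simp: indep_set_def)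
  then show ?thesis by (simp add: alt_indep_count_def)
qed

lemma indep_set_insert_iff:
  assumes E: "\<forall>e\<in>E. card e = 2" and "v \<notin> S"
  shows "indep_set V E (insert v S) \<longleftrightarrow> v \<in> V \<and> indep_set (V - insert v (neighbours E v)) E S"
proof
  assume indep: "indep_set V E (insert v S)"
  then have "u \<notin> S" if "u \<in> neighbours E v" for u
    using that by (auto simp: indep_set_def neighbours_def)
  then show "v \<in> V \<and> indep_set (V - insert v (neighbours E v)) E S"
    using indep \<open>v \<notin> S\<close> by (auto simp: indep_set_def)
next
  assume v: "v \<in> V \<and> indep_set (V - insert v (neighbours E v)) E S"
  have "\<not> e \<subseteq> insert v S" if "e \<in> E" for e
  proof
    assume sub: "e \<subseteq> insert v S"
    obtain a b where e: "e = {a, b}" "a \<noteq> b"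
      using E \<open>e \<in> E\<close> by (auto simp: card_2_iff)
    show False
    proof (cases "v \<in> e")
      case True
      then obtain u where "e = {v, u}" "u \<noteq> v" using e by auto
      then show False using v sub \<open>e \<in> E\<close> by (auto simp: indep_set_def neighbours_def)
    next
      case False
      then show False using v sub \<open>e \<in> E\<close> by (auto simp: indep_set_def)
    qed
  qed
  then show "indep_set V E (insert v S)" using v by (auto simp: indep_set_def)
qed

lemma alt_indep_count_delete_vertex:
  assumes V: "finite V" and "v \<in> V" and E: "\<forall>e\<in>E. card e = 2"
  shows "alt_indep_count V E
           = alt_indep_count (V - {v}) E - alt_indep_count (V - insert v (neighbours E v)) E"
proof -
  let ?I = "{S. indep_set V E S}" and ?J = "{S. indep_set (V - insert v (neighbours E v)) E S}"
  have without_v: "?I - {S. v \<in> S} = {S. indep_set (V - {v}) E S}"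
    by (auto simp: indep_set_def)
  have with_v: "?I \<inter> {S. v \<in> S} = insert v ` ?J"
  proof (intro set_eqI iffI)
    fix T assume T: "T \<in> ?I \<inter> {S. v \<in> S}"
    then have "T - {v} \<in> ?J"
      using indep_set_insert_iff[OF E, of v "T - {v}" V] by (simp add: insert_absorb)
    with T show "T \<in> insert v ` ?J" by (metis IntD2 insert_Diff mem_Collect_eq rev_image_eqI)
  next
    fix T assume "T \<in> insert v ` ?J"
    then obtain S where "S \<in> ?J" "T = insert v S" by auto
    moreover have "v \<notin> S" using \<open>S \<in> ?J\<close> by (auto simp: indep_set_def)
    ultimately show "T \<in> ?I \<inter> {S. v \<in> S}"
      using indep_set_insert_iff[OF E, of v S V] \<open>v \<in> V\<close> by simp
  qed
  have "inj_on (insert v) ?J"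
    by (rule inj_onI) (auto simp: indep_set_def)
  then have "(\<Sum>S\<in>?I \<inter> {S. v \<in> S}. (-1::int) ^ card S) = (\<Sum>S\<in>?J. (-1) ^ card (insert v S))"
    unfolding with_v by (simp add: sum.reindex)
  also have "\<dots> = - alt_indep_count (V - insert v (neighbours E v)) E"
    unfolding alt_indep_count_def sum_negf[symmetric]
  proof (rule sum.cong[OF refl])
    fix S assume "S \<in> ?J"
    then have "finite S" "v \<notin> S" using finite_indep_set[OF V] by (auto simp: indep_set_def)
    then show "(-1::int) ^ card (insert v S) = - ((-1) ^ card S)" by simp
  qed
  finally have "(\<Sum>S\<in>?I \<inter> {S. v \<in> S}. (-1) ^ card S)
      = - alt_indep_count (V - insert v (neighbours E v)) E" .
  moreover have "alt_indep_count V E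
      = (\<Sum>S\<in>?I \<inter> {S. v \<in> S}. (-1) ^ card S) + (\<Sum>S\<in>?I - {S. v \<in> S}. (-1) ^ card S)"
    unfolding alt_indep_count_def by (rule sum.Int_Diff[OF finite_indep_sets[OF V]])
  ultimately show ?thesis unfolding without_v alt_indep_count_def by simp
qed

lemma alt_indep_count_isolated_vertex:
  assumes "finite V" "v \<in> V" "\<forall>e\<in>E. card e = 2" "neighbours E v \<inter> V = {}"
  shows "alt_indep_count V E = 0"
proof -
  have "V - insert v (neighbours E v) = V - {v}" using assms(4) by auto
  then show ?thesis using alt_indep_count_delete_vertex[OF assms(1-3)] by simp
qed

lemma alt_indep_count_pendant:
  assumes V: "finite V" and "l \<in> V" "x \<in> V" "l \<noteq> x" and E: "\<forall>e\<in>E. card e = 2"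
    and "neighbours E l \<inter> V \<subseteq> {x}"
  shows "alt_indep_count V E = - alt_indep_count (V - insert x (neighbours E x)) E"
proof -
  have "alt_indep_count (V - {x}) E = 0"
    by (rule alt_indep_count_isolated_vertex) (use assms in auto)
  then show ?thesis using alt_indep_count_delete_vertex[OF V \<open>x \<in> V\<close> E] by simp
qed

definition monomials_with_support :: "'a set \<Rightarrow> nat \<Rightarrow> ('a \<Rightarrow> nat) set" where
  "monomials_with_support S d = {a. {x. 0 < a x} = S \<and> sum a S = d}"

lemma finite_monomials_with_support:
  assumes "finite S"
  shows "finite (monomials_with_support S d)"
proof -
  have "monomials_with_support S d \<subseteq> {a. \<forall>x. (x \<in> S \<longrightarrow> a x \<in> {..d}) \<and> (x \<notin> S \<longrightarrow> a x = 0)}"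
    unfolding monomials_with_support_def using member_le_sum[OF _ _ assms] by fastforce
  then show ?thesis
    by (rule finite_subset) (rule finite_set_of_finite_funs; use assms in simp)
qed

lemma hilb_fun_eq_sum_monomials_with_support:
  assumes V: "finite V"
  shows "hilb_fun V E d = (\<Sum>S | indep_set V E S. card (monomials_with_support S d))"
proof -
  let ?I = "{S. indep_set V E S}"
  have standard: "{a. (\<forall>v. v \<notin> V \<longrightarrow> a v = 0) \<and> sum a V = d \<and> (\<forall>e\<in>E. \<not> (\<forall>v\<in>e. 0 < a v))}
      = (\<Union>S\<in>?I. monomials_with_support S d)"
  proof (intro set_eqI iffI)
    fix a assume a: "a \<in> {a. (\<forall>v. v \<notin> V \<longrightarrow> a v = 0) \<and> sum a V = d \<and> (\<forall>e\<in>E. \<not> (\<forall>v\<in>e. 0 < a v))}"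
    let ?S = "{x. 0 < a x}"
    have "?S \<subseteq> V" using a by auto
    then have "sum a ?S = sum a V" by (intro sum.mono_neutral_left) (use V in auto)
    moreover have "indep_set V E ?S" using a \<open>?S \<subseteq> V\<close> by (fastforce simp: indep_set_def)
    ultimately show "a \<in> (\<Union>S\<in>?I. monomials_with_support S d)"
      using a by (auto simp: monomials_with_support_def)
  next
    fix a assume "a \<in> (\<Union>S\<in>?I. monomials_with_support S d)"
    then obtain S where S: "indep_set V E S" and a: "{x. 0 < a x} = S" "sum a S = d"
      by (auto simp: monomials_with_support_def)
    have "sum a S = sum a V"
      by (rule sum.mono_neutral_left) (use V S a in \<open>auto simp: indep_set_def\<close>)
    then show "a \<in> {a. (\<forall>v. v \<notin> V \<longrightarrow> a v = 0) \<and> sum a V = d \<and> (\<forall>e\<in>E. \<not> (\<forall>v\<in>e. 0 < a v))}"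
      using S a by (auto simp: indep_set_def)
  qed
  have "card (\<Union>S\<in>?I. monomials_with_support S d) = (\<Sum>S\<in>?I. card (monomials_with_support S d))"
  proof (rule card_UN_disjoint)
    show "finite ?I" by (rule finite_indep_sets[OF V])
    show "\<forall>S\<in>?I. finite (monomials_with_support S d)"
      by (auto intro: finite_monomials_with_support finite_indep_set[OF V])
    show "\<forall>S\<in>?I. \<forall>T\<in>?I. S \<noteq> T \<longrightarrow> monomials_with_support S d \<inter> monomials_with_support T d = {}"
      by (auto simp: monomials_with_support_def)
  qed
  then show ?thesis unfolding hilb_fun_def standard .
qed

lemma monomials_with_support_insert:
  assumes "finite S" "v \<notin> S"
  shows "monomials_with_support (insert v S) d
           = (\<Union>i\<in>{1..d}. (\<lambda>b. b(v := i)) ` monomials_with_support S (d - i))"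
proof (intro set_eqI iffI)
  fix a assume a: "a \<in> monomials_with_support (insert v S) d"
  have "sum (a(v := 0)) S = sum a S" using assms(2) by (intro sum.cong) auto
  then have "a(v := 0) \<in> monomials_with_support S (d - a v)" "a v \<in> {1..d}"
    using a assms by (auto simp: monomials_with_support_def)
  moreover have "a = (a(v := 0))(v := a v)" by simp
  ultimately show "a \<in> (\<Union>i\<in>{1..d}. (\<lambda>b. b(v := i)) ` monomials_with_support S (d - i))" by blast
next
  fix a assume "a \<in> (\<Union>i\<in>{1..d}. (\<lambda>b. b(v := i)) ` monomials_with_support S (d - i))"
  then obtain i b where i: "i \<in> {1..d}" and b: "b \<in> monomials_with_support S (d - i)"
    and a: "a = b(v := i)"
    by auto
  have "sum a S = sum b S" using a assms(2) by (intro sum.cong) auto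
  then show "a \<in> monomials_with_support (insert v S) d"
    using assms i b a by (auto simp: monomials_with_support_def)
qed

lemma card_monomials_with_support_insert:
  assumes "finite S" "v \<notin> S"
  shows "card (monomials_with_support (insert v S) d)
           = (\<Sum>i\<in>{1..d}. card (monomials_with_support S (d - i)))"
proof -
  have vanish: "b v = 0" if "b \<in> monomials_with_support S k" for b k
    using that assms(2) by (auto simp: monomials_with_support_def)
  have "card (monomials_with_support (insert v S) d)
      = (\<Sum>i\<in>{1..d}. card ((\<lambda>b. b(v := i)) ` monomials_with_support S (d - i)))"
    unfolding monomials_with_support_insert[OF assms]
    by (rule card_UN_disjoint) (auto simp: finite_monomials_with_support assms(1) dest: fun_upd_eqD)
  also have "\<dots> = (\<Sum>i\<in>{1..d}. card (monomials_with_support S (d - i)))"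
  proof (intro sum.cong refl card_image inj_onI)
    fix i b b' assume "b \<in> monomials_with_support S (d - i)" "b' \<in> monomials_with_support S (d - i)"
      and "b(v := i) = b'(v := i)"
    then show "b = b'" using vanish by (metis fun_upd_triv fun_upd_upd)
  qed
  finally show ?thesis .
qed

definition support_series :: "'a set \<Rightarrow> rat fps" where
  "support_series S = Abs_fps (\<lambda>d. of_nat (card (monomials_with_support S d)))"

lemma support_series_empty: "support_series {} = 1"
proof (rule fps_ext)
  fix d
  have empty: "monomials_with_support {} d = (if d = 0 then {\<lambda>_. 0} else {})"
    by (auto simp: monomials_with_support_def)
  have card: "card (monomials_with_support {} d) = (if d = 0 then 1 else 0)"
    unfolding empty by simp
  show "support_series {} $ d = 1 $ d"
    by (simp only: support_series_def fps_nth_Abs_fps card) simp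
qed

text \<open>Each variable in the support contributes the factor $t + t^2 + \dots = t/(1-t)$.\<close>
lemma support_series_insert:
  assumes "finite S" "v \<notin> S"
  shows "support_series (insert v S) = Abs_fps (\<lambda>i. if i = 0 then 0 else 1) * support_series S"
proof (rule fps_ext)
  fix d
  have "(Abs_fps (\<lambda>i. if i = 0 then 0 else 1) * support_series S) $ d
      = (\<Sum>i\<in>{1..d}. support_series S $ (d - i))"
    unfolding fps_mult_nth by (rule sum.mono_neutral_cong_right) auto
  then show "support_series (insert v S) $ d
      = (Abs_fps (\<lambda>i. if i = 0 then 0 else 1) * support_series S) $ d"
    by (simp add: support_series_def card_monomials_with_support_insert[OF assms])
qed

lemma support_series_mult_power:
  "finite S \<Longrightarrow> support_series S * (1 - fps_X) ^ card S = fps_X ^ card S"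
proof (induction S rule: finite_induct)
  case empty
  then show ?case by (simp add: support_series_empty)
next
  case (insert v S)
  have geometric: "Abs_fps (\<lambda>i. if i = 0 then 0 else 1) * (1 - fps_X) = (fps_X :: rat fps)"
  proof (rule fps_ext)
    fix i
    show "(Abs_fps (\<lambda>i. if i = 0 then 0 else 1) * (1 - fps_X)) $ i = (fps_X :: rat fps) $ i"
      by (cases i) (simp_all add: algebra_simps)
  qed
  have "support_series (insert v S) * (1 - fps_X) ^ card (insert v S)
      = (Abs_fps (\<lambda>i. if i = 0 then 0 else 1) * (1 - fps_X)) * (support_series S * (1 - fps_X) ^ card S)"
    using insert by (simp add: support_series_insert mult_ac)
  then show ?case using insert by (simp add: geometric)
qed

lemma hilb_series_eq_sum_support_series:
  "finite V \<Longrightarrow> hilb_series V E = (\<Sum>S | indep_set V E S. support_series S)"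
  by (rule fps_ext)
    (simp add: hilb_series_def fps_sum_nth support_series_def hilb_fun_eq_sum_monomials_with_support)

lemma card_le_indep_num: "finite V \<Longrightarrow> indep_set V E S \<Longrightarrow> card S \<le> indep_num V E"
  unfolding indep_num_def by (auto intro: Max_ge finite_indep_sets)

lemma h_poly_eq:
  assumes V: "finite V"
  shows "h_poly V E
           = (\<Sum>S | indep_set V E S. monom 1 (card S) * [:1, -1:] ^ (indep_num V E - card S))"
    (is "_ = ?h")
proof -
  let ?I = "{S. indep_set V E S}" and ?\<alpha> = "indep_num V E"
  have "hilb_series V E * (1 - fps_X) ^ ?\<alpha>
      = (\<Sum>S\<in>?I. (support_series S * (1 - fps_X) ^ card S) * (1 - fps_X) ^ (?\<alpha> - card S))"
    unfolding hilb_series_eq_sum_support_series[OF V] sum_distrib_right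
    by (intro sum.cong refl)
      (simp add: mult.assoc power_add[symmetric] card_le_indep_num[OF V])
  also have "\<dots> = (\<Sum>S\<in>?I. fps_X ^ card S * (1 - fps_X) ^ (?\<alpha> - card S))"
    by (intro sum.cong refl) (simp add: support_series_mult_power finite_indep_set[OF V])
  also have "\<dots> = fps_of_poly ?h"
  proof -
    have one_minus_X: "fps_of_poly [:1, -1:] = (1 - fps_X :: rat fps)"
      by (simp add: fps_of_poly_pCons fps_const_neg[symmetric])
    show ?thesis
      by (simp only: fps_of_poly_sum fps_of_poly_mult fps_of_poly_monom' fps_of_poly_power
          one_minus_X)
  qed
  finally have h: "fps_of_poly ?h = hilb_series V E * (1 - fps_X) ^ ?\<alpha>" ..
  then show ?thesis
    unfolding h_poly_def by (rule the_equality) (simp add: h[symmetric] fps_of_poly_eq_iff)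
qed

lemma degree_one_minus_X_power: "degree ([:1, -1:] ^ k :: rat poly) = k"
  by (simp add: degree_power_eq)

lemma degree_h_poly_le:
  assumes V: "finite V"
  shows "degree (h_poly V E) \<le> indep_num V E"
  unfolding h_poly_eq[OF V]
proof (rule degree_sum_le[OF finite_indep_sets[OF V]])
  fix S assume "S \<in> {S. indep_set V E S}"
  then have "card S \<le> indep_num V E" using card_le_indep_num[OF V] by simp
  moreover have "degree (monom (1::rat) (card S) * [:1, -1:] ^ (indep_num V E - card S))
      \<le> card S + (indep_num V E - card S)"
    using degree_mult_le[of "monom (1::rat) (card S)"] degree_monom_le[of "1::rat" "card S"]
    by (metis add_le_mono1 degree_one_minus_X_power order.trans)
  ultimately show "degree (monom (1::rat) (card S) * [:1, -1:] ^ (indep_num V E - card S))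
      \<le> indep_num V E"
    by simp
qed

lemma coeff_h_poly_indep_num:
  assumes V: "finite V"
  shows "coeff (h_poly V E) (indep_num V E) = (-1) ^ indep_num V E * of_int (alt_indep_count V E)"
proof -
  let ?\<alpha> = "indep_num V E"
  have "coeff (monom (1::rat) (card S) * [:1, -1:] ^ (?\<alpha> - card S)) ?\<alpha>
      = (-1) ^ ?\<alpha> * (-1) ^ card S"
    if "indep_set V E S" for S
  proof -
    have le: "card S \<le> ?\<alpha>" using card_le_indep_num[OF V that] .
    then have "coeff (monom (1::rat) (card S) * [:1, -1:] ^ (?\<alpha> - card S)) ?\<alpha>
        = lead_coeff ([:1, -1:] ^ (?\<alpha> - card S) :: rat poly)"
      by (simp add: coeff_monom_mult degree_one_minus_X_power)
    also have "\<dots> = (-1) ^ (?\<alpha> - card S)" by (simp add: lead_coeff_power)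
    also have "\<dots> = (-1) ^ ?\<alpha> * (-1) ^ card S"
      using le by (auto simp: minus_one_power_iff)
    finally show ?thesis .
  qed
  then show ?thesis
    by (simp add: h_poly_eq[OF V] coeff_sum alt_indep_count_def sum_distrib_left)
qed

lemma a_invariant_eq_0:
  assumes "finite V" and "alt_indep_count V E \<noteq> 0"
  shows "a_invariant V E = 0"
proof -
  have "coeff (h_poly V E) (indep_num V E) \<noteq> 0"
    using assms by (simp add: coeff_h_poly_indep_num)
  then have "degree (h_poly V E) = indep_num V E"
    by (intro antisym degree_h_poly_le[OF assms(1)] le_degree)
  then show ?thesis by (simp add: a_invariant_def)
qed

lemma card_G_edges: "\<forall>e\<in>G_edges n m C f t. card e = 2"
  by (auto simp: G_edges_def)

lemma neighbours_Xv:
  "i < n \<Longrightarrow> neighbours (G_edges n m C f t) (Xv i) = {Yv j | j. (i, j) \<in> C} \<union> {Lf i l | l. l < f i}"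
  by (auto simp: neighbours_def G_edges_def doubleton_eq_iff)

lemma neighbours_Lf: "neighbours (G_edges n m C f t) (Lf i l) \<subseteq> {Xv i}"
  by (auto simp: neighbours_def G_edges_def doubleton_eq_iff)

lemma neighbours_TU:
  "j < m \<Longrightarrow> k < t j \<Longrightarrow> neighbours (G_edges n m C f t) (TU j k) = {Yv j, TW j k}"
  by (auto simp: neighbours_def G_edges_def doubleton_eq_iff)

lemma neighbours_TW: "neighbours (G_edges n m C f t) (TW j k) \<subseteq> {Yv j, TU j k}"
  by (auto simp: neighbours_def G_edges_def doubleton_eq_iff)

definition triangle_verts :: "(nat \<times> nat) set \<Rightarrow> gv set" where
  "triangle_verts P = (\<lambda>(j, k). TU j k) ` P \<union> (\<lambda>(j, k). TW j k) ` P"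

lemma alt_indep_count_triangle_verts:
  assumes "finite P" "P \<subseteq> {(j, k). j < m \<and> k < t j}"
  shows "alt_indep_count (triangle_verts P) (G_edges n m C f t) = (-1) ^ card P"
  using assms
proof (induction P rule: finite_induct)
  case empty
  have "{} \<notin> G_edges n m C f t" using card_G_edges by force
  then show ?case by (simp add: triangle_verts_def alt_indep_count_empty)
next
  case (insert p P)
  obtain j k where p: "p = (j, k)" and "j < m" "k < t j" using insert.prems by auto
  let ?E = "G_edges n m C f t"
  have "alt_indep_count (triangle_verts (insert p P)) ?E
      = - alt_indep_count (triangle_verts (insert p P) - insert (TU j k) (neighbours ?E (TU j k))) ?E"
    by (rule alt_indep_count_pendant[where l = "TW j k", OF _ _ _ _ card_G_edges])
      (use insert.hyps(1) p neighbours_TW[of n m C f t j k] in \<open>auto simp: triangle_verts_def\<close>)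
  also have "triangle_verts (insert p P) - insert (TU j k) (neighbours ?E (TU j k)) = triangle_verts P"
    using neighbours_TU[of j m k t n C f] \<open>j < m\<close> \<open>k < t j\<close> p insert.hyps(2)
    by (auto simp: triangle_verts_def)
  finally show ?case using insert by simp
qed

text \<open>The vertices of $G - N[x_0] - \dots - N[x_{k-1}]$.\<close>
definition G_verts_after ::
    "nat \<Rightarrow> nat \<Rightarrow> (nat \<times> nat) set \<Rightarrow> (nat \<Rightarrow> nat) \<Rightarrow> (nat \<Rightarrow> nat) \<Rightarrow> nat \<Rightarrow> gv set"
  where
  "G_verts_after n m C f t k =
     {Xv i | i. k \<le> i \<and> i < n} \<union> {Lf i l | i l. k \<le> i \<and> i < n \<and> l < f i}
     \<union> {Yv j | j. j < m \<and> (\<forall>i<k. (i, j) \<notin> C)} \<union> triangle_verts {(j, l). j < m \<and> l < t j}"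

lemma pairs_below_eq_Sigma: "{(j, k). j < m \<and> k < t j} = (SIGMA j:{..<m}. {..<t j})"
  by auto

lemma finite_pairs_below: "finite {(j, k). j < (m::nat) \<and> k < (t j :: nat)}"
  by (simp add: pairs_below_eq_Sigma)

lemma card_pairs_below: "card {(j, k). j < (m::nat) \<and> k < (t j :: nat)} = (\<Sum>j<m. t j)"
  by (simp add: pairs_below_eq_Sigma card_SigmaI)

lemma finite_G_verts_after: "finite (G_verts_after n m C f t k)"
proof -
  have "{Lf i l | i l. k \<le> i \<and> i < n \<and> l < f i} \<subseteq> (\<lambda>(i, l). Lf i l) ` (SIGMA i:{..<n}. {..<f i})"
    by auto
  then have "finite {Lf i l | i l. k \<le> i \<and> i < n \<and> l < f i}" by (rule finite_subset) auto
  moreover have "{Xv i | i. k \<le> i \<and> i < n} \<subseteq> Xv ` {..<n}" by auto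
  moreover have "{Yv j | j. j < m \<and> (\<forall>i<k. (i, j) \<notin> C)} \<subseteq> Yv ` {..<m}" by auto
  ultimately show ?thesis
    unfolding G_verts_after_def triangle_verts_def using finite_pairs_below[of m t]
    by (auto intro: finite_subset)
qed

lemma G_verts_after_0: "G_verts_after n m C f t 0 = G_verts n m f t"
  unfolding G_verts_after_def G_verts_def triangle_verts_def core_verts_def by auto

lemma core_connected_imp_neighbour:
  assumes "n \<ge> 1" "C \<subseteq> {..<n} \<times> {..<m}" "core_connected n m C" "j < m"
  shows "\<exists>i<n. (i, j) \<in> C"
proof -
  have "(core_adj C)\<^sup>*\<^sup>* (Yv j) (Xv 0)"
    using assms unfolding core_connected_def core_verts_def by auto
  then show ?thesis
  proof (cases rule: converse_rtranclpE)
    case (step y)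
    then obtain i where "(i, j) \<in> C" unfolding core_adj_def by auto
    then show ?thesis using assms(2) by auto
  qed simp
qed

lemma G_verts_after_n:
  assumes "n \<ge> 1" "C \<subseteq> {..<n} \<times> {..<m}" "core_connected n m C"
  shows "G_verts_after n m C f t n = triangle_verts {(j, k). j < m \<and> k < t j}"
  using core_connected_imp_neighbour[OF assms] unfolding G_verts_after_def by auto

lemma alt_indep_count_G_verts_after_Suc:
  assumes "k < n" "f k \<ge> 1"
  shows "alt_indep_count (G_verts_after n m C f t k) (G_edges n m C f t)
           = - alt_indep_count (G_verts_after n m C f t (Suc k)) (G_edges n m C f t)"
proof -
  let ?E = "G_edges n m C f t"
  have "alt_indep_count (G_verts_after n m C f t k) ?E
      = - alt_indep_count (G_verts_after n m C f t k - insert (Xv k) (neighbours ?E (Xv k))) ?E"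
    by (rule alt_indep_count_pendant[where l = "Lf k 0", OF finite_G_verts_after _ _ _ card_G_edges])
      (use assms neighbours_Lf[of n m C f t k 0] in \<open>auto simp: G_verts_after_def\<close>)
  also have "G_verts_after n m C f t k - insert (Xv k) (neighbours ?E (Xv k))
      = G_verts_after n m C f t (Suc k)"
    unfolding neighbours_Xv[OF assms(1)]
    by (auto simp: G_verts_after_def triangle_verts_def less_Suc_eq le_less)
  finally show ?thesis .
qed

lemma alt_indep_count_G_verts_after:
  assumes "k \<le> n" "\<forall>i<n. f i \<ge> 1"
  shows "alt_indep_count (G_verts n m f t) (G_edges n m C f t)
           = (-1) ^ k * alt_indep_count (G_verts_after n m C f t k) (G_edges n m C f t)"
  using assms
proof (induction k)
  case 0
  then show ?case by (simp add: G_verts_after_0)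
next
  case (Suc k)
  then show ?case using alt_indep_count_G_verts_after_Suc[of k n f m C t] by simp
qed

lemma alt_indep_count_G:
  assumes "n \<ge> 1" "C \<subseteq> {..<n} \<times> {..<m}" "core_connected n m C" "\<forall>i<n. f i \<ge> 1"
  shows "alt_indep_count (G_verts n m f t) (G_edges n m C f t) = (-1) ^ (n + (\<Sum>j<m. t j))"
proof -
  have "alt_indep_count (triangle_verts {(j, k). j < m \<and> k < t j}) (G_edges n m C f t)
      = (-1) ^ (\<Sum>j<m. t j)"
    using alt_indep_count_triangle_verts[OF finite_pairs_below order.refl] by (simp add: card_pairs_below)
  then show ?thesis
    using alt_indep_count_G_verts_after[of n n f m t C] assms G_verts_after_n[OF assms(1-3)]
    by (simp add: power_add)
qed

theorem theorem4p3:
  fixes n m :: nat and C :: "(nat \<times> nat) set" and f t :: "nat \<Rightarrow> nat"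
  assumes "n \<ge> 1" and "m \<ge> 1"
    and "C \<subseteq> {..<n} \<times> {..<m}"
    and "core_connected n m C"
    and "\<forall>i<n. f i \<ge> 1"
  shows "poly (indep_poly (G_verts n m f t) (G_edges n m C f t)) (-1)
           = (-1) ^ (n + (\<Sum>j<m. t j))
         \<and> a_invariant (G_verts n m f t) (G_edges n m C f t) = 0"
proof
  have alt: "alt_indep_count (G_verts n m f t) (G_edges n m C f t) = (-1) ^ (n + (\<Sum>j<m. t j))"
    using alt_indep_count_G assms(1,3-5) .
  then show "poly (indep_poly (G_verts n m f t) (G_edges n m C f t)) (-1) = (-1) ^ (n + (\<Sum>j<m. t j))"
    by (simp add: poly_indep_poly_minus_one)
  show "a_invariant (G_verts n m f t) (G_edges n m C f t) = 0"
    using finite_G_verts_after[of n m C f t 0] alt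
    by (intro a_invariant_eq_0) (simp_all add: G_verts_after_0)
qed

end
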